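(* Let $\Lambda$ be a row-finite $k$-graph with no sources and let $\alpha$ be an action of $\mathbb{Z}^l$ on $\Lambda$ by automorphisms. Then for $x\in\Lambda^\infty$ and $(p,m)\in\mathbb{N}^k\times\mathbb{N}^l$, the shift map on $(\Lambda\times_\alpha\mathbb{Z}^l)^\infty$ satisfies $\sigma^{(p,m)}(x,\infty)=(\alpha^\infty_{-m}(\sigma^p(x)),\infty)$. Moreover, $\sigma^p\circ\alpha^\infty_{-m}=\alpha^\infty_{-m}\circ\sigma^p$; in particular $\sigma^{(p,m)}(x,\infty)=(\sigma^p(\alpha^\infty_{-m}(x)),\infty)$.
   Context: A $k$-graph is a countable category $\Lambda$ with a functor $d:\Lambda\to\mathbb{N}^k$ with unique factorisation; vertices are degree-$0$ morphisms; row-finite: each $v\Lambda^n$ finite; no sources: each $v\Lambda^n$ nonempty. An automorphism is a bijective degree-preserving functor. $\Lambda\times_\alpha\mathbb{Z}^l$ is the $(k+l)$-graph with morphisms $\Lambda\times\mathbb{N}^l$, degree $(d(\lambda),m)$, $r(\lambda,m)=(r(\lambda),0)$, $s(\lambda,m)=(\alpha_{-m}(s(\lambda)),0)$, $(\mu,m)(\nu,n)=(\mu\alpha_m(\nu),m+n)$. For a $j$-graph $\Gamma$, $\Gamma^\infty$ is the set of degree-preserving functors $x:\Omega_j\to\Gamma$ ($\Omega_j=\{(a,b)\in\mathbb{N}^j\times\mathbb{N}^j:a\le b\}$, $r(a,b)=(a,a)$, $s(a,b)=(b,b)$, $(a,b)(b,c)=(a,c)$, $d(a,b)=b-a$); $\sigma^q(x)$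 is the infinite path with $\sigma^q(x)(0,n)=x(q,q+n)$. For an automorphism $\phi$ of $\Lambda$, $\phi^\infty(x)$ is the infinite path with $\phi^\infty(x)(0,n)=\phi(x(0,n))$. For $x\in\Lambda^\infty$, $(x,\infty)$ denotes the unique infinite path of $\Lambda\times_\alpha\mathbb{Z}^l$ with $(x,\infty)((0,0),(p,0))=(x(0,p),0)$ for all $p\in\mathbb{N}^k$. *)

theory Defs
  imports "HOL-Library.Countable_Set"
begin

text \<open>Elements of N^k are functions nat => nat vanishing from index k on;
 elements of Z^l are functions nat => int vanishing from index l on.
 The order on N^k is the pointwise order (le_fun).\<close>

definition NN :: "nat \<Rightarrow> (nat \<Rightarrow> nat) set" where
  "NN k = {n. \<forall>i\<ge>k. n i = 0}"

definition ZZ :: "nat \<Rightarrow> (nat \<Rightarrow> int) set" where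
  "ZZ l = {g. \<forall>i\<ge>l. g i = 0}"

definition vadd :: "(nat \<Rightarrow> nat) \<Rightarrow> (nat \<Rightarrow> nat) \<Rightarrow> nat \<Rightarrow> nat" where
  "vadd m n = (\<lambda>i. m i + n i)"

definition vsub :: "(nat \<Rightarrow> nat) \<Rightarrow> (nat \<Rightarrow> nat) \<Rightarrow> nat \<Rightarrow> nat" where
  "vsub m n = (\<lambda>i. m i - n i)"

text \<open>A category is given by its set of morphisms; objects are identified with
 identity morphisms; rng/src give the identity at range/source.\<close>

record 'm kgraph =
  Mor :: "'m set"
  rng :: "'m \<Rightarrow> 'm"
  src :: "'m \<Rightarrow> 'm"
  cmp :: "'m \<Rightarrow> 'm \<Rightarrow> 'm"
  deg :: "'m \<Rightarrow> nat \<Rightarrow> nat"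

definition is_kgraph :: "nat \<Rightarrow> 'm kgraph \<Rightarrow> bool" where
  "is_kgraph k G \<longleftrightarrow>
     countable (Mor G) \<and>
     (\<forall>\<eta>\<in>Mor G. rng G \<eta> \<in> Mor G \<and> src G \<eta> \<in> Mor G \<and>
        rng G (rng G \<eta>) = rng G \<eta> \<and> src G (rng G \<eta>) = rng G \<eta> \<and>
        rng G (src G \<eta>) = src G \<eta> \<and> src G (src G \<eta>) = src G \<eta> \<and>
        cmp G (rng G \<eta>) \<eta> = \<eta> \<and> cmp G \<eta> (src G \<eta>) = \<eta>) \<and>
     (\<forall>\<mu>\<in>Mor G. \<forall>\<nu>\<in>Mor G. src G \<mu> = rng G \<nu> \<longrightarrow>
        cmp G \<mu> \<nu> \<in> Mor G \<and> rng G (cmp G \<mu> \<nu>) = rng G \<mu> \<and> src G (cmp G \<mu> \<nu>) = src G \<nu>) \<and>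
     (\<forall>\<mu>\<in>Mor G. \<forall>\<nu>\<in>Mor G. \<forall>\<rho>\<in>Mor G. src G \<mu> = rng G \<nu> \<longrightarrow> src G \<nu> = rng G \<rho> \<longrightarrow>
        cmp G (cmp G \<mu> \<nu>) \<rho> = cmp G \<mu> (cmp G \<nu> \<rho>)) \<and>
     (\<forall>\<eta>\<in>Mor G. deg G \<eta> \<in> NN k) \<and>
     (\<forall>\<mu>\<in>Mor G. \<forall>\<nu>\<in>Mor G. src G \<mu> = rng G \<nu> \<longrightarrow>
        deg G (cmp G \<mu> \<nu>) = vadd (deg G \<mu>) (deg G \<nu>)) \<and>
     (\<forall>\<eta>\<in>Mor G. \<forall>m\<in>NN k. \<forall>n\<in>NN k. deg G \<eta> = vadd m n \<longrightarrow>
        (\<exists>!(\<mu>, \<nu>). \<mu> \<in> Mor G \<and> \<nu> \<in> Mor G \<and> src G \<mu> = rng G \<nu> \<and>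
            deg G \<mu> = m \<and> deg G \<nu> = n \<and> \<eta> = cmp G \<mu> \<nu>))"

definition vertices :: "'m kgraph \<Rightarrow> 'm set" where
  "vertices G = {v \<in> Mor G. deg G v = (\<lambda>_. 0)}"

definition row_finite :: "nat \<Rightarrow> 'm kgraph \<Rightarrow> bool" where
  "row_finite k G \<longleftrightarrow> (\<forall>v\<in>vertices G. \<forall>n\<in>NN k. finite {\<eta>\<in>Mor G. rng G \<eta> = v \<and> deg G \<eta> = n})"

definition no_sources :: "nat \<Rightarrow> 'm kgraph \<Rightarrow> bool" where
  "no_sources k G \<longleftrightarrow> (\<forall>v\<in>vertices G. \<forall>n\<in>NN k. {\<eta>\<in>Mor G. rng G \<eta> = v \<and> deg G \<eta> = n} \<noteq> {})"

definition is_automorphism :: "'m kgraph \<Rightarrow> ('m \<Rightarrow> 'm) \<Rightarrow> bool" where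
  "is_automorphism G \<phi> \<longleftrightarrow>
     bij_betw \<phi> (Mor G) (Mor G) \<and>
     (\<forall>\<eta>\<in>Mor G. deg G (\<phi> \<eta>) = deg G \<eta> \<and>
        rng G (\<phi> \<eta>) = \<phi> (rng G \<eta>) \<and> src G (\<phi> \<eta>) = \<phi> (src G \<eta>)) \<and>
     (\<forall>\<mu>\<in>Mor G. \<forall>\<nu>\<in>Mor G. src G \<mu> = rng G \<nu> \<longrightarrow> \<phi> (cmp G \<mu> \<nu>) = cmp G (\<phi> \<mu>) (\<phi> \<nu>))"

definition is_action :: "nat \<Rightarrow> 'm kgraph \<Rightarrow> ((nat \<Rightarrow> int) \<Rightarrow> 'm \<Rightarrow> 'm) \<Rightarrow> bool" where
  "is_action l G \<alpha> \<longleftrightarrow>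
     (\<forall>g\<in>ZZ l. is_automorphism G (\<alpha> g)) \<and>
     (\<forall>\<eta>\<in>Mor G. \<alpha> (\<lambda>_. 0) \<eta> = \<eta>) \<and>
     (\<forall>g\<in>ZZ l. \<forall>h\<in>ZZ l. \<forall>\<eta>\<in>Mor G. \<alpha> (\<lambda>i. g i + h i) \<eta> = \<alpha> g (\<alpha> h \<eta>))"

definition pos :: "(nat \<Rightarrow> nat) \<Rightarrow> nat \<Rightarrow> int" where
  "pos m = (\<lambda>i. int (m i))"
definition neg :: "(nat \<Rightarrow> nat) \<Rightarrow> nat \<Rightarrow> int" where
  "neg m = (\<lambda>i. - int (m i))"

definition join :: "nat \<Rightarrow> (nat \<Rightarrow> nat) \<Rightarrow> (nat \<Rightarrow> nat) \<Rightarrow> nat \<Rightarrow> nat" where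
  "join k p m = (\<lambda>i. if i < k then p i else m (i - k))"

definition skew :: "nat \<Rightarrow> nat \<Rightarrow> 'm kgraph \<Rightarrow> ((nat \<Rightarrow> int) \<Rightarrow> 'm \<Rightarrow> 'm)
                    \<Rightarrow> ('m \<times> (nat \<Rightarrow> nat)) kgraph" where
  "skew k l G \<alpha> =
    \<lparr> Mor = Mor G \<times> NN l,
      rng = (\<lambda>(\<eta>, m). (rng G \<eta>, (\<lambda>_. 0))),
      src = (\<lambda>(\<eta>, m). (\<alpha> (neg m) (src G \<eta>), (\<lambda>_. 0))),
      cmp = (\<lambda>(\<mu>, m) (\<nu>, n). (cmp G \<mu> (\<alpha> (pos m) \<nu>), vadd m n)),
      deg = (\<lambda>(\<eta>, m). join k (deg G \<eta>) m) \<rparr>"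

definition Omega :: "nat \<Rightarrow> ((nat \<Rightarrow> nat) \<times> (nat \<Rightarrow> nat)) set" where
  "Omega j = {(a, b). a \<in> NN j \<and> b \<in> NN j \<and> a \<le> b}"

text \<open>Degree-preserving functors Omega_j -> G; as usual in HOL, the function is
 fixed to be undefined outside Omega_j so that equality is equality of functors.\<close>
definition paths :: "nat \<Rightarrow> 'm kgraph \<Rightarrow> ((nat \<Rightarrow> nat) \<times> (nat \<Rightarrow> nat) \<Rightarrow> 'm) set" where
  "paths j G = {x.
     (\<forall>(a, b)\<in>Omega j. x (a, b) \<in> Mor G \<and> deg G (x (a, b)) = vsub b a \<and>
         rng G (x (a, b)) = x (a, a) \<and> src G (x (a, b)) = x (b, b)) \<and>
     (\<forall>a b c. (a, b) \<in> Omega j \<longrightarrow> (b, c) \<in> Omega j \<longrightarrow>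
         cmp G (x (a, b)) (x (b, c)) = x (a, c)) \<and>
     (\<forall>ab. ab \<notin> Omega j \<longrightarrow> x ab = undefined)}"

definition shift :: "nat \<Rightarrow> (nat \<Rightarrow> nat) \<Rightarrow> ((nat \<Rightarrow> nat) \<times> (nat \<Rightarrow> nat) \<Rightarrow> 'm)
                     \<Rightarrow> (nat \<Rightarrow> nat) \<times> (nat \<Rightarrow> nat) \<Rightarrow> 'm" where
  "shift j q x = (\<lambda>(a, b). if (a, b) \<in> Omega j then x (vadd q a, vadd q b) else undefined)"

definition path_map :: "nat \<Rightarrow> ('m \<Rightarrow> 'm) \<Rightarrow> ((nat \<Rightarrow> nat) \<times> (nat \<Rightarrow> nat) \<Rightarrow> 'm)
                     \<Rightarrow> (nat \<Rightarrow> nat) \<times> (nat \<Rightarrow> nat) \<Rightarrow> 'm" where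
  "path_map j \<phi> x = (\<lambda>(a, b). if (a, b) \<in> Omega j then \<phi> (x (a, b)) else undefined)"

definition xinf :: "nat \<Rightarrow> nat \<Rightarrow> 'm kgraph \<Rightarrow> ((nat \<Rightarrow> int) \<Rightarrow> 'm \<Rightarrow> 'm)
    \<Rightarrow> ((nat \<Rightarrow> nat) \<times> (nat \<Rightarrow> nat) \<Rightarrow> 'm)
    \<Rightarrow> (nat \<Rightarrow> nat) \<times> (nat \<Rightarrow> nat) \<Rightarrow> 'm \<times> (nat \<Rightarrow> nat)" where
  "xinf k l G \<alpha> x = (THE y. y \<in> paths (k + l) (skew k l G \<alpha>) \<and>
      (\<forall>p\<in>NN k. y (\<lambda>_. 0, join k p (\<lambda>_. 0)) = (x (\<lambda>_. 0, p), (\<lambda>_. 0))))"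

end

theory Submission
  imports Defs
begin

text \<open>Split each a in N^(k+l) as (a1, a2) with a1 in N^k and a2 in N^l. The path (x, \<infinity>) is
  explicitly (a, b) \<mapsto> (alpha_{-a2} (x (a1, b1)), b2 - a2): this is a path of the skew product
  with the prescribed values on N^k \<times> 0, and unique factorisation in Lambda shows that it is the
  only one. Shifting this formula by (p, m) gives the formula for alpha_{-m}^\<infinity> (sigma^p x),
  because alpha_{-(a2 + m)} = alpha_{-a2} \<circ> alpha_{-m}. Finally sigma^p and alpha_{-m}^\<infinity>
  commute because one acts on the arguments of a path and the other on its values.\<close>

definition proj_fst :: "nat \<Rightarrow> (nat \<Rightarrow> nat) \<Rightarrow> nat \<Rightarrow> nat" where
  "proj_fst k a = (\<lambda>i. if i < k then a i else 0)"

definition proj_snd :: "nat \<Rightarrow> (nat \<Rightarrow> nat) \<Rightarrow> nat \<Rightarrow> nat" where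
  "proj_snd k a = (\<lambda>i. a (i + k))"

lemma Omega_iff: "(a, b) \<in> Omega j \<longleftrightarrow> a \<in> NN j \<and> b \<in> NN j \<and> (\<forall>i. a i \<le> b i)"
  by (auto simp: Omega_def le_fun_def)

lemma zero_NN [simp]: "(\<lambda>_. 0) \<in> NN k"
  by (simp add: NN_def)

lemma Omega_diag:
  assumes "(a, b) \<in> Omega j"
  shows "(a, a) \<in> Omega j" and "(b, b) \<in> Omega j"
  using assms by (simp_all add: Omega_iff)

lemma Omega_from_zero: "a \<in> NN j \<Longrightarrow> (\<lambda>_. 0, a) \<in> Omega j"
  by (simp add: Omega_iff)

lemma Omega_trans: "(a, b) \<in> Omega j \<Longrightarrow> (b, c) \<in> Omega j \<Longrightarrow> (a, c) \<in> Omega j"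
  by (auto simp: Omega_iff intro: order_trans)

lemma Omega_vadd: "(a, b) \<in> Omega j \<Longrightarrow> q \<in> NN j \<Longrightarrow> (vadd q a, vadd q b) \<in> Omega j"
  by (auto simp: Omega_iff NN_def vadd_def)

lemma vsub_NN: "a \<in> NN l \<Longrightarrow> b \<in> NN l \<Longrightarrow> vsub b a \<in> NN l"
  by (simp add: vsub_def NN_def)

lemma neg_ZZ: "m \<in> NN l \<Longrightarrow> neg m \<in> ZZ l"
  by (simp add: neg_def NN_def ZZ_def)

lemma pos_ZZ: "m \<in> NN l \<Longrightarrow> pos m \<in> ZZ l"
  by (simp add: pos_def NN_def ZZ_def)

lemma neg_zero [simp]: "neg (\<lambda>_. 0) = (\<lambda>_. 0)"
  by (simp add: neg_def)

lemma pos_zero [simp]: "pos (\<lambda>_. 0) = (\<lambda>_. 0)"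
  by (simp add: pos_def)

lemma join_NN: "p \<in> NN k \<Longrightarrow> m \<in> NN l \<Longrightarrow> join k p m \<in> NN (k + l)"
  by (auto simp: join_def NN_def)

lemma proj_fst_NN: "proj_fst k a \<in> NN k"
  by (simp add: proj_fst_def NN_def)

lemma proj_snd_NN: "a \<in> NN (k + l) \<Longrightarrow> proj_snd k a \<in> NN l"
  by (simp add: proj_snd_def NN_def)

lemma proj_fst_join: "p \<in> NN k \<Longrightarrow> proj_fst k (join k p m) = p"
  by (auto simp: proj_fst_def join_def NN_def)

lemma proj_snd_join: "proj_snd k (join k p m) = m"
  by (simp add: proj_snd_def join_def)

lemma proj_fst_zero [simp]: "proj_fst k (\<lambda>_. 0) = (\<lambda>_. 0)"
  by (simp add: proj_fst_def)

lemma proj_snd_zero [simp]: "proj_snd k (\<lambda>_. 0) = (\<lambda>_. 0)"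
  by (simp add: proj_snd_def)

lemma Omega_proj_fst: "(a, b) \<in> Omega (k + l) \<Longrightarrow> (proj_fst k a, proj_fst k b) \<in> Omega k"
  by (auto simp: Omega_iff NN_def proj_fst_def)

lemma proj_snd_mono: "(a, b) \<in> Omega (k + l) \<Longrightarrow> proj_snd k a i \<le> proj_snd k b i"
  by (simp add: Omega_iff proj_snd_def)

lemma skew_simps [simp]:
  "Mor (skew k l G \<alpha>) = Mor G \<times> NN l"
  "rng (skew k l G \<alpha>) (\<eta>, n) = (rng G \<eta>, \<lambda>_. 0)"
  "src (skew k l G \<alpha>) (\<eta>, n) = (\<alpha> (neg n) (src G \<eta>), \<lambda>_. 0)"
  "cmp (skew k l G \<alpha>) (\<mu>, m) (\<nu>, n) = (cmp G \<mu> (\<alpha> (pos m) \<nu>), vadd m n)"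
  "deg (skew k l G \<alpha>) (\<eta>, n) = join k (deg G \<eta>) n"
  by (simp_all add: skew_def)

lemma action_automorphism: "is_action l G \<alpha> \<Longrightarrow> g \<in> ZZ l \<Longrightarrow> is_automorphism G (\<alpha> g)"
  by (simp add: is_action_def)

lemma automorphism_Mor: "is_automorphism G \<phi> \<Longrightarrow> \<eta> \<in> Mor G \<Longrightarrow> \<phi> \<eta> \<in> Mor G"
  unfolding is_automorphism_def by (metis bij_betw_apply)

lemma automorphism_cmp:
  "is_automorphism G \<phi> \<Longrightarrow> \<mu> \<in> Mor G \<Longrightarrow> \<nu> \<in> Mor G \<Longrightarrow> src G \<mu> = rng G \<nu>
   \<Longrightarrow> cmp G (\<phi> \<mu>) (\<phi> \<nu>) = \<phi> (cmp G \<mu> \<nu>)"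
  unfolding is_automorphism_def by metis

lemma action_Mor: "is_action l G \<alpha> \<Longrightarrow> g \<in> ZZ l \<Longrightarrow> \<eta> \<in> Mor G \<Longrightarrow> \<alpha> g \<eta> \<in> Mor G"
  by (metis action_automorphism automorphism_Mor)

lemma action_deg: "is_action l G \<alpha> \<Longrightarrow> g \<in> ZZ l \<Longrightarrow> \<eta> \<in> Mor G \<Longrightarrow> deg G (\<alpha> g \<eta>) = deg G \<eta>"
  using action_automorphism unfolding is_automorphism_def by blast

lemma action_rng: "is_action l G \<alpha> \<Longrightarrow> g \<in> ZZ l \<Longrightarrow> \<eta> \<in> Mor G \<Longrightarrow> rng G (\<alpha> g \<eta>) = \<alpha> g (rng G \<eta>)"
  using action_automorphism unfolding is_automorphism_def by blast

lemma action_src: "is_action l G \<alpha> \<Longrightarrow> g \<in> ZZ l \<Longrightarrow> \<eta> \<in> Mor G \<Longrightarrow> src G (\<alpha> g \<eta>) = \<alpha> g (src G \<eta>)"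
  using action_automorphism unfolding is_automorphism_def by blast

lemma action_cmp:
  "is_action l G \<alpha> \<Longrightarrow> g \<in> ZZ l \<Longrightarrow> \<mu> \<in> Mor G \<Longrightarrow> \<nu> \<in> Mor G \<Longrightarrow> src G \<mu> = rng G \<nu>
   \<Longrightarrow> cmp G (\<alpha> g \<mu>) (\<alpha> g \<nu>) = \<alpha> g (cmp G \<mu> \<nu>)"
  by (simp add: action_automorphism automorphism_cmp)

lemma action_zero: "is_action l G \<alpha> \<Longrightarrow> \<eta> \<in> Mor G \<Longrightarrow> \<alpha> (\<lambda>_. 0) \<eta> = \<eta>"
  by (simp add: is_action_def)

lemma action_add:
  "is_action l G \<alpha> \<Longrightarrow> g \<in> ZZ l \<Longrightarrow> h \<in> ZZ l \<Longrightarrow> \<eta> \<in> Mor G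
   \<Longrightarrow> \<alpha> g (\<alpha> h \<eta>) = \<alpha> (\<lambda>i. g i + h i) \<eta>"
  by (simp add: is_action_def)

lemma action_neg_pos:
  assumes "is_action l G \<alpha>" "m \<in> NN l" "\<eta> \<in> Mor G"
  shows "\<alpha> (neg m) (\<alpha> (pos m) \<eta>) = \<eta>" and "\<alpha> (pos m) (\<alpha> (neg m) \<eta>) = \<eta>"
  using action_add[OF assms(1) neg_ZZ pos_ZZ, of m m] action_add[OF assms(1) pos_ZZ neg_ZZ, of m m]
    action_zero[OF assms(1)] assms(2,3)
  by (simp_all add: neg_def pos_def)

lemma kgraph_deg_NN: "is_kgraph k G \<Longrightarrow> \<eta> \<in> Mor G \<Longrightarrow> deg G \<eta> \<in> NN k"
  unfolding is_kgraph_def by (elim conjE) simp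

lemma kgraph_cmp_Mor:
  "is_kgraph k G \<Longrightarrow> \<mu> \<in> Mor G \<Longrightarrow> \<nu> \<in> Mor G \<Longrightarrow> src G \<mu> = rng G \<nu> \<Longrightarrow> cmp G \<mu> \<nu> \<in> Mor G"
  unfolding is_kgraph_def by (elim conjE) simp

lemma kgraph_deg_cmp:
  "is_kgraph k G \<Longrightarrow> \<mu> \<in> Mor G \<Longrightarrow> \<nu> \<in> Mor G \<Longrightarrow> src G \<mu> = rng G \<nu>
   \<Longrightarrow> deg G (cmp G \<mu> \<nu>) = vadd (deg G \<mu>) (deg G \<nu>)"
  unfolding is_kgraph_def by (elim conjE) simp

lemma kgraph_identities:
  assumes "is_kgraph k G" "\<eta> \<in> Mor G"
  shows "rng G \<eta> \<in> Mor G" "src G \<eta> \<in> Mor G" "src G (rng G \<eta>) = rng G \<eta>"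
    "rng G (src G \<eta>) = src G \<eta>" "cmp G (rng G \<eta>) \<eta> = \<eta>" "cmp G \<eta> (src G \<eta>) = \<eta>"
  using assms unfolding is_kgraph_def by (elim conjE; simp)+

lemma kgraph_factorisation_ex1:
  "is_kgraph k G \<Longrightarrow> \<eta> \<in> Mor G \<Longrightarrow> m \<in> NN k \<Longrightarrow> n \<in> NN k \<Longrightarrow> deg G \<eta> = vadd m n \<Longrightarrow>
   \<exists>!(\<mu>, \<nu>). \<mu> \<in> Mor G \<and> \<nu> \<in> Mor G \<and> src G \<mu> = rng G \<nu> \<and>
     deg G \<mu> = m \<and> deg G \<nu> = n \<and> \<eta> = cmp G \<mu> \<nu>"
  unfolding is_kgraph_def by (elim conjE) simp

lemma kgraph_factorisation_unique:
  assumes kg: "is_kgraph k G" and \<mu>: "\<mu> \<in> Mor G" and \<nu>: "\<nu> \<in> Mor G" and "\<mu>' \<in> Mor G" "\<nu>' \<in> Mor G"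
    and \<mu>\<nu>: "src G \<mu> = rng G \<nu>" and "src G \<mu>' = rng G \<nu>'" "deg G \<mu> = deg G \<mu>'" "deg G \<nu> = deg G \<nu>'"
    and "cmp G \<mu> \<nu> = cmp G \<mu>' \<nu>'"
  shows "\<mu> = \<mu>' \<and> \<nu> = \<nu>'"
proof -
  let ?P = "\<lambda>(\<mu>'', \<nu>''). \<mu>'' \<in> Mor G \<and> \<nu>'' \<in> Mor G \<and> src G \<mu>'' = rng G \<nu>'' \<and>
     deg G \<mu>'' = deg G \<mu> \<and> deg G \<nu>'' = deg G \<nu> \<and> cmp G \<mu> \<nu> = cmp G \<mu>'' \<nu>''"
  have "\<exists>!z. ?P z"
    by (rule kgraph_factorisation_ex1[OF kg kgraph_cmp_Mor[OF kg \<mu> \<nu> \<mu>\<nu>]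
          kgraph_deg_NN[OF kg \<mu>] kgraph_deg_NN[OF kg \<nu>] kgraph_deg_cmp[OF kg \<mu> \<nu> \<mu>\<nu>]])
  then obtain z where "\<And>y. ?P y \<Longrightarrow> y = z"
    by blast
  from this[of "(\<mu>, \<nu>)"] this[of "(\<mu>', \<nu>')"] show ?thesis
    using assms by simp
qed

lemma kgraph_deg_zero_rng:
  assumes kg: "is_kgraph k G" and \<eta>: "\<eta> \<in> Mor G" and deg0: "deg G \<eta> = (\<lambda>_. 0)"
  shows "rng G \<eta> = \<eta>"
proof -
  note id = kgraph_identities[OF kg \<eta>]
  have "vadd (deg G (rng G \<eta>)) (\<lambda>_. 0) = (\<lambda>_. 0)" "vadd (\<lambda>_. 0) (deg G (src G \<eta>)) = (\<lambda>_. 0)"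
    using kgraph_deg_cmp[OF kg id(1) \<eta> id(3)] kgraph_deg_cmp[OF kg \<eta> id(2) id(4)[symmetric]]
    by (simp_all only: id(5,6) deg0)
  then have "deg G (rng G \<eta>) = (\<lambda>_. 0)" "deg G (src G \<eta>) = (\<lambda>_. 0)"
    by (simp_all add: vadd_def fun_eq_iff)
  then show ?thesis
    using kgraph_factorisation_unique[OF kg id(1) \<eta> \<eta> id(2)] id deg0 by simp
qed

section \<open>Infinite paths\<close>

lemma path_Mor: "x \<in> paths j G \<Longrightarrow> (a, b) \<in> Omega j \<Longrightarrow> x (a, b) \<in> Mor G"
  unfolding paths_def by blast

lemma path_deg: "x \<in> paths j G \<Longrightarrow> (a, b) \<in> Omega j \<Longrightarrow> deg G (x (a, b)) = vsub b a"
  unfolding paths_def by blast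

lemma path_rng: "x \<in> paths j G \<Longrightarrow> (a, b) \<in> Omega j \<Longrightarrow> rng G (x (a, b)) = x (a, a)"
  unfolding paths_def by blast

lemma path_src: "x \<in> paths j G \<Longrightarrow> (a, b) \<in> Omega j \<Longrightarrow> src G (x (a, b)) = x (b, b)"
  unfolding paths_def by blast

lemma path_cmp:
  "x \<in> paths j G \<Longrightarrow> (a, b) \<in> Omega j \<Longrightarrow> (b, c) \<in> Omega j \<Longrightarrow> cmp G (x (a, b)) (x (b, c)) = x (a, c)"
  unfolding paths_def by blast

lemma path_undefined: "x \<in> paths j G \<Longrightarrow> ab \<notin> Omega j \<Longrightarrow> x ab = undefined"
  unfolding paths_def by blast

lemma pathsI:
  assumes "\<And>a b. (a, b) \<in> Omega j \<Longrightarrow> x (a, b) \<in> Mor G \<and> deg G (x (a, b)) = vsub b a \<and>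
      rng G (x (a, b)) = x (a, a) \<and> src G (x (a, b)) = x (b, b)"
    and "\<And>a b c. (a, b) \<in> Omega j \<Longrightarrow> (b, c) \<in> Omega j \<Longrightarrow> cmp G (x (a, b)) (x (b, c)) = x (a, c)"
    and "\<And>ab. ab \<notin> Omega j \<Longrightarrow> x ab = undefined"
  shows "x \<in> paths j G"
  using assms unfolding paths_def by auto

lemma shift_apply: "(a, b) \<in> Omega j \<Longrightarrow> shift j q x (a, b) = x (vadd q a, vadd q b)"
  by (simp add: shift_def)

lemma path_map_apply: "(a, b) \<in> Omega j \<Longrightarrow> path_map j \<phi> x (a, b) = \<phi> (x (a, b))"
  by (simp add: path_map_def)

lemma shift_in_paths:
  assumes x: "x \<in> paths j G" and q: "q \<in> NN j"
  shows "shift j q x \<in> paths j G"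
proof (rule pathsI)
  fix a b assume ab: "(a, b) \<in> Omega j"
  have "vsub (vadd q b) (vadd q a) = vsub b a"
    by (simp add: vsub_def vadd_def)
  with Omega_vadd[OF ab q] Omega_diag[OF ab] show "shift j q x (a, b) \<in> Mor G \<and>
      deg G (shift j q x (a, b)) = vsub b a \<and>
      rng G (shift j q x (a, b)) = shift j q x (a, a) \<and> src G (shift j q x (a, b)) = shift j q x (b, b)"
    by (simp add: shift_apply ab path_Mor[OF x] path_deg[OF x] path_rng[OF x] path_src[OF x])
next
  fix a b c assume "(a, b) \<in> Omega j" "(b, c) \<in> Omega j"
  then show "cmp G (shift j q x (a, b)) (shift j q x (b, c)) = shift j q x (a, c)"
    using path_cmp[OF x Omega_vadd Omega_vadd] q Omega_trans by (simp add: shift_apply)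
qed (auto simp: shift_def)

lemma path_map_in_paths:
  assumes x: "x \<in> paths j G" and \<phi>: "is_automorphism G \<phi>"
  shows "path_map j \<phi> x \<in> paths j G"
proof (rule pathsI)
  fix a b assume ab: "(a, b) \<in> Omega j"
  then show "path_map j \<phi> x (a, b) \<in> Mor G \<and> deg G (path_map j \<phi> x (a, b)) = vsub b a \<and>
      rng G (path_map j \<phi> x (a, b)) = path_map j \<phi> x (a, a) \<and>
      src G (path_map j \<phi> x (a, b)) = path_map j \<phi> x (b, b)"
    using path_Mor[OF x ab] path_deg[OF x ab] path_rng[OF x ab] path_src[OF x ab] Omega_diag[OF ab]
      automorphism_Mor[OF \<phi>] \<phi> unfolding is_automorphism_def by (simp add: path_map_apply)
next
  fix a b c assume ab: "(a, b) \<in> Omega j" and bc: "(b, c) \<in> Omega j"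
  have "src G (x (a, b)) = rng G (x (b, c))"
    using path_src[OF x ab] path_rng[OF x bc] by simp
  with \<phi> show "cmp G (path_map j \<phi> x (a, b)) (path_map j \<phi> x (b, c)) = path_map j \<phi> x (a, c)"
    using path_cmp[OF x ab bc] path_Mor[OF x ab] path_Mor[OF x bc] Omega_trans[OF ab bc]
    by (simp add: path_map_apply ab bc automorphism_cmp)
qed (auto simp: path_map_def)

lemma shift_path_map_commute:
  assumes "q \<in> NN j"
  shows "shift j q (path_map j \<phi> x) = path_map j \<phi> (shift j q x)"
  using Omega_vadd[OF _ assms] by (auto simp: fun_eq_iff shift_def path_map_def)

section \<open>The path \<open>(x, \<infinity>)\<close> of the skew product\<close>

definition skew_path :: "nat \<Rightarrow> nat \<Rightarrow> ((nat \<Rightarrow> int) \<Rightarrow> 'm \<Rightarrow> 'm)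
    \<Rightarrow> ((nat \<Rightarrow> nat) \<times> (nat \<Rightarrow> nat) \<Rightarrow> 'm)
    \<Rightarrow> (nat \<Rightarrow> nat) \<times> (nat \<Rightarrow> nat) \<Rightarrow> 'm \<times> (nat \<Rightarrow> nat)" where
  "skew_path k l \<alpha> x = (\<lambda>(a, b). if (a, b) \<in> Omega (k + l) then
      (\<alpha> (neg (proj_snd k a)) (x (proj_fst k a, proj_fst k b)), vsub (proj_snd k b) (proj_snd k a))
    else undefined)"

lemma skew_path_apply:
  "(a, b) \<in> Omega (k + l) \<Longrightarrow> skew_path k l \<alpha> x (a, b) =
     (\<alpha> (neg (proj_snd k a)) (x (proj_fst k a, proj_fst k b)), vsub (proj_snd k b) (proj_snd k a))"
  by (simp add: skew_path_def)

lemma skew_path_in_paths: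
  assumes act: "is_action l G \<alpha>" and x: "x \<in> paths k G"
  shows "skew_path k l \<alpha> x \<in> paths (k + l) (skew k l G \<alpha>)"
proof (rule pathsI)
  fix a b assume ab: "(a, b) \<in> Omega (k + l)"
  let ?a\<^sub>1 = "proj_fst k a" and ?b\<^sub>1 = "proj_fst k b" and ?a\<^sub>2 = "proj_snd k a" and ?b\<^sub>2 = "proj_snd k b"
  have ab\<^sub>1: "(?a\<^sub>1, ?b\<^sub>1) \<in> Omega k"
    using ab by (rule Omega_proj_fst)
  have NN\<^sub>2: "?a\<^sub>2 \<in> NN l" "?b\<^sub>2 \<in> NN l"
    using ab by (auto simp: Omega_iff intro: proj_snd_NN)
  have x\<^sub>b\<^sub>b: "x (?b\<^sub>1, ?b\<^sub>1) \<in> Mor G"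
    using path_Mor[OF x] Omega_diag[OF ab\<^sub>1] by blast
  have "(\<lambda>i. neg (vsub ?b\<^sub>2 ?a\<^sub>2) i + neg ?a\<^sub>2 i) = neg ?b\<^sub>2"
    using proj_snd_mono[OF ab] by (auto simp: neg_def vsub_def fun_eq_iff)
  then have "\<alpha> (neg (vsub ?b\<^sub>2 ?a\<^sub>2)) (\<alpha> (neg ?a\<^sub>2) (x (?b\<^sub>1, ?b\<^sub>1))) = \<alpha> (neg ?b\<^sub>2) (x (?b\<^sub>1, ?b\<^sub>1))"
    using action_add[OF act neg_ZZ[OF vsub_NN[OF NN\<^sub>2]] neg_ZZ[OF NN\<^sub>2(1)] x\<^sub>b\<^sub>b] by simp
  then show "skew_path k l \<alpha> x (a, b) \<in> Mor (skew k l G \<alpha>) \<and>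
      deg (skew k l G \<alpha>) (skew_path k l \<alpha> x (a, b)) = vsub b a \<and>
      rng (skew k l G \<alpha>) (skew_path k l \<alpha> x (a, b)) = skew_path k l \<alpha> x (a, a) \<and>
      src (skew k l G \<alpha>) (skew_path k l \<alpha> x (a, b)) = skew_path k l \<alpha> x (b, b)"
    using Omega_diag[OF ab] vsub_NN[OF NN\<^sub>2] path_Mor[OF x ab\<^sub>1] path_deg[OF x ab\<^sub>1]
      path_rng[OF x ab\<^sub>1] path_src[OF x ab\<^sub>1] neg_ZZ[OF NN\<^sub>2(1)]
    by (auto simp: skew_path_apply ab action_Mor[OF act] action_deg[OF act] action_rng[OF act]
        action_src[OF act] join_def vsub_def proj_fst_def proj_snd_def fun_eq_iff)
next
  fix a b c assume ab: "(a, b) \<in> Omega (k + l)" and bc: "(b, c) \<in> Omega (k + l)"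
  let ?a\<^sub>1 = "proj_fst k a" and ?b\<^sub>1 = "proj_fst k b" and ?c\<^sub>1 = "proj_fst k c"
    and ?a\<^sub>2 = "proj_snd k a" and ?b\<^sub>2 = "proj_snd k b" and ?c\<^sub>2 = "proj_snd k c"
  have ab\<^sub>1: "(?a\<^sub>1, ?b\<^sub>1) \<in> Omega k" and bc\<^sub>1: "(?b\<^sub>1, ?c\<^sub>1) \<in> Omega k"
    using ab bc by (simp_all add: Omega_proj_fst)
  have NN\<^sub>2: "?a\<^sub>2 \<in> NN l" "?b\<^sub>2 \<in> NN l"
    using ab by (auto simp: Omega_iff intro: proj_snd_NN)
  have x\<^sub>b\<^sub>c: "x (?b\<^sub>1, ?c\<^sub>1) \<in> Mor G"
    using path_Mor[OF x bc\<^sub>1] .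
  have "(\<lambda>i. pos (vsub ?b\<^sub>2 ?a\<^sub>2) i + neg ?b\<^sub>2 i) = neg ?a\<^sub>2"
    using proj_snd_mono[OF ab] by (auto simp: neg_def pos_def vsub_def fun_eq_iff)
  then have "\<alpha> (pos (vsub ?b\<^sub>2 ?a\<^sub>2)) (\<alpha> (neg ?b\<^sub>2) (x (?b\<^sub>1, ?c\<^sub>1))) = \<alpha> (neg ?a\<^sub>2) (x (?b\<^sub>1, ?c\<^sub>1))"
    using action_add[OF act pos_ZZ[OF vsub_NN[OF NN\<^sub>2]] neg_ZZ[OF NN\<^sub>2(2)] x\<^sub>b\<^sub>c] by simp
  moreover have "cmp G (\<alpha> (neg ?a\<^sub>2) (x (?a\<^sub>1, ?b\<^sub>1))) (\<alpha> (neg ?a\<^sub>2) (x (?b\<^sub>1, ?c\<^sub>1)))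
      = \<alpha> (neg ?a\<^sub>2) (x (?a\<^sub>1, ?c\<^sub>1))"
    using action_cmp[OF act neg_ZZ[OF NN\<^sub>2(1)] path_Mor[OF x ab\<^sub>1] x\<^sub>b\<^sub>c]
      path_src[OF x ab\<^sub>1] path_rng[OF x bc\<^sub>1] path_cmp[OF x ab\<^sub>1 bc\<^sub>1] by simp
  moreover have "vadd (vsub ?b\<^sub>2 ?a\<^sub>2) (vsub ?c\<^sub>2 ?b\<^sub>2) = vsub ?c\<^sub>2 ?a\<^sub>2"
    using proj_snd_mono[OF ab] proj_snd_mono[OF bc]
    by (auto simp: vadd_def vsub_def fun_eq_iff intro: le_add_diff_inverse)
  ultimately show "cmp (skew k l G \<alpha>) (skew_path k l \<alpha> x (a, b)) (skew_path k l \<alpha> x (b, c))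
      = skew_path k l \<alpha> x (a, c)"
    using Omega_trans[OF ab bc] by (simp add: skew_path_apply ab bc)
qed (auto simp: skew_path_def)

lemma skew_path_initial:
  assumes act: "is_action l G \<alpha>" and x: "x \<in> paths k G" and p: "p \<in> NN k"
  shows "skew_path k l \<alpha> x (\<lambda>_. 0, join k p (\<lambda>_. 0)) = (x (\<lambda>_. 0, p), \<lambda>_. 0)"
  using Omega_from_zero[OF join_NN[OF p zero_NN]] path_Mor[OF x Omega_from_zero[OF p]]
  by (simp add: skew_path_apply proj_fst_join[OF p] proj_snd_join action_zero[OF act]
      neg_def vsub_def)


lemma skew_paths_value:
  assumes kg: "is_kgraph k G" and y: "y \<in> paths (k + l) (skew k l G \<alpha>)" and ab: "(a, b) \<in> Omega (k + l)"
  obtains \<eta> where "y (a, b) = (\<eta>, vsub (proj_snd k b) (proj_snd k a))" and "\<eta> \<in> Mor G"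
    and "deg G \<eta> = vsub (proj_fst k b) (proj_fst k a)"
proof -
  obtain \<eta> n where y\<^sub>a\<^sub>b: "y (a, b) = (\<eta>, n)"
    by fastforce
  have \<eta>: "\<eta> \<in> Mor G" and deg: "\<And>i. join k (deg G \<eta>) n i = vsub b a i"
    using path_Mor[OF y ab] path_deg[OF y ab] y\<^sub>a\<^sub>b by auto
  have "n = vsub (proj_snd k b) (proj_snd k a)"
    using deg[of "_ + k"] by (simp add: fun_eq_iff join_def vsub_def proj_snd_def)
  moreover have "deg G \<eta> = vsub (proj_fst k b) (proj_fst k a)"
  proof
    fix i
    show "deg G \<eta> i = vsub (proj_fst k b) (proj_fst k a) i"
      using deg[of i] kgraph_deg_NN[OF kg \<eta>]
      by (cases "i < k") (simp_all add: join_def vsub_def proj_fst_def NN_def)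
  qed
  ultimately show ?thesis
    using that y\<^sub>a\<^sub>b \<eta> by simp
qed

lemma skew_paths_from_zero:
  assumes kg: "is_kgraph k G" and act: "is_action l G \<alpha>" and x: "x \<in> paths k G"
    and y: "y \<in> paths (k + l) (skew k l G \<alpha>)"
    and initial: "\<forall>p\<in>NN k. y (\<lambda>_. 0, join k p (\<lambda>_. 0)) = (x (\<lambda>_. 0, p), \<lambda>_. 0)"
    and b: "b \<in> NN (k + l)"
  shows "y (\<lambda>_. 0, b) = (x (\<lambda>_. 0, proj_fst k b), proj_snd k b)"
proof -
  let ?b\<^sub>1 = "proj_fst k b"
  define c where "c = join k ?b\<^sub>1 (\<lambda>_. 0)"
  have c: "c \<in> NN (k + l)"
    unfolding c_def by (rule join_NN[OF proj_fst_NN zero_NN])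
  have cb: "(c, b) \<in> Omega (k + l)"
    using c b by (auto simp: Omega_iff c_def join_def proj_fst_def)
  have y\<^sub>0\<^sub>c: "y (\<lambda>_. 0, c) = (x (\<lambda>_. 0, ?b\<^sub>1), \<lambda>_. 0)"
    using initial proj_fst_NN unfolding c_def by blast
  have zero_b\<^sub>1: "(\<lambda>_. 0, ?b\<^sub>1) \<in> Omega k" and b\<^sub>1b\<^sub>1: "(?b\<^sub>1, ?b\<^sub>1) \<in> Omega k"
    using Omega_from_zero[OF proj_fst_NN] by (blast intro: Omega_diag)+
  have x\<^sub>0\<^sub>b: "x (\<lambda>_. 0, ?b\<^sub>1) \<in> Mor G" "src G (x (\<lambda>_. 0, ?b\<^sub>1)) = x (?b\<^sub>1, ?b\<^sub>1)"
    using path_Mor[OF x zero_b\<^sub>1] path_src[OF x zero_b\<^sub>1] .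
  have x\<^sub>b\<^sub>b: "x (?b\<^sub>1, ?b\<^sub>1) \<in> Mor G"
    using path_Mor[OF x b\<^sub>1b\<^sub>1] .
  have c\<^sub>1: "proj_fst k c = ?b\<^sub>1" and c\<^sub>2: "proj_snd k c = (\<lambda>_. 0)"
    unfolding c_def by (simp_all add: proj_fst_join[OF proj_fst_NN] proj_snd_join)
  obtain \<eta> where y\<^sub>c\<^sub>b: "y (c, b) = (\<eta>, proj_snd k b)" and \<eta>: "\<eta> \<in> Mor G" and "deg G \<eta> = (\<lambda>_. 0)"
    using skew_paths_value[OF kg y cb] unfolding c\<^sub>1 c\<^sub>2 by (simp add: vsub_def) blast
  moreover have "y (c, c) = (x (?b\<^sub>1, ?b\<^sub>1), \<lambda>_. 0)"
    using path_src[OF y Omega_from_zero[OF c]] y\<^sub>0\<^sub>c x\<^sub>0\<^sub>b action_zero[OF act x\<^sub>b\<^sub>b] by simp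
  moreover have "y (c, c) = (rng G \<eta>, \<lambda>_. 0)"
    using path_rng[OF y cb] y\<^sub>c\<^sub>b by simp
  ultimately have "\<eta> = x (?b\<^sub>1, ?b\<^sub>1)"
    using kgraph_deg_zero_rng[OF kg \<eta>] by auto
  have "y (\<lambda>_. 0, b) = cmp (skew k l G \<alpha>) (y (\<lambda>_. 0, c)) (y (c, b))"
    using path_cmp[OF y Omega_from_zero[OF c] cb] by simp
  also have "\<dots> = (cmp G (x (\<lambda>_. 0, ?b\<^sub>1)) \<eta>, proj_snd k b)"
    using y\<^sub>0\<^sub>c y\<^sub>c\<^sub>b action_zero[OF act \<eta>] by (simp add: vadd_def)
  also have "\<dots> = (x (\<lambda>_. 0, ?b\<^sub>1), proj_snd k b)"
    using path_cmp[OF x zero_b\<^sub>1 b\<^sub>1b\<^sub>1] \<open>\<eta> = x (?b\<^sub>1, ?b\<^sub>1)\<close> by simp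
  finally show ?thesis .
qed


lemma skew_paths_unique:
  assumes kg: "is_kgraph k G" and act: "is_action l G \<alpha>" and x: "x \<in> paths k G"
    and y: "y \<in> paths (k + l) (skew k l G \<alpha>)"
    and initial: "\<forall>p\<in>NN k. y (\<lambda>_. 0, join k p (\<lambda>_. 0)) = (x (\<lambda>_. 0, p), \<lambda>_. 0)"
  shows "y = skew_path k l \<alpha> x"
proof
  fix ab :: "(nat \<Rightarrow> nat) \<times> (nat \<Rightarrow> nat)"
  obtain a b where ab_def: "ab = (a, b)"
    by fastforce
  show "y ab = skew_path k l \<alpha> x ab"
  proof (cases "(a, b) \<in> Omega (k + l)")
    case False
    then show ?thesis
      using path_undefined[OF y] by (simp add: ab_def skew_path_def)
  next
    case ab: True
    let ?a\<^sub>1 = "proj_fst k a" and ?b\<^sub>1 = "proj_fst k b" and ?a\<^sub>2 = "proj_snd k a"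
    have a: "a \<in> NN (k + l)" and b: "b \<in> NN (k + l)"
      using ab by (simp_all add: Omega_iff)
    have ab\<^sub>1: "(?a\<^sub>1, ?b\<^sub>1) \<in> Omega k" and zero_a\<^sub>1: "(\<lambda>_. 0, ?a\<^sub>1) \<in> Omega k"
      using ab by (simp_all add: Omega_proj_fst Omega_from_zero proj_fst_NN)
    have a\<^sub>2: "?a\<^sub>2 \<in> NN l"
      using a by (rule proj_snd_NN)
    obtain \<eta> where y\<^sub>a\<^sub>b: "y (a, b) = (\<eta>, vsub (proj_snd k b) ?a\<^sub>2)" and \<eta>: "\<eta> \<in> Mor G"
      and deg: "deg G \<eta> = vsub ?b\<^sub>1 ?a\<^sub>1"
      using skew_paths_value[OF kg y ab] .
    have y\<^sub>0\<^sub>a: "y (\<lambda>_. 0, a) = (x (\<lambda>_. 0, ?a\<^sub>1), ?a\<^sub>2)"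
      and y\<^sub>0\<^sub>b: "y (\<lambda>_. 0, b) = (x (\<lambda>_. 0, ?b\<^sub>1), proj_snd k b)"
      using skew_paths_from_zero[OF kg act x y initial] a b by simp_all
    have "y (a, a) = (\<alpha> (neg ?a\<^sub>2) (x (?a\<^sub>1, ?a\<^sub>1)), \<lambda>_. 0)"
      using path_src[OF y Omega_from_zero[OF a]] path_src[OF x zero_a\<^sub>1] y\<^sub>0\<^sub>a by simp
    moreover have "y (a, a) = (rng G \<eta>, \<lambda>_. 0)"
      using path_rng[OF y ab] y\<^sub>a\<^sub>b by simp
    ultimately have "rng G (\<alpha> (pos ?a\<^sub>2) \<eta>) = x (?a\<^sub>1, ?a\<^sub>1)"
      using action_rng[OF act pos_ZZ[OF a\<^sub>2] \<eta>] action_neg_pos(2)[OF act a\<^sub>2]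
        path_Mor[OF x Omega_diag(2)[OF zero_a\<^sub>1]] by simp
    moreover have "cmp G (x (\<lambda>_. 0, ?a\<^sub>1)) (\<alpha> (pos ?a\<^sub>2) \<eta>) = x (\<lambda>_. 0, ?b\<^sub>1)"
      using path_cmp[OF y Omega_from_zero[OF a] ab] y\<^sub>0\<^sub>a y\<^sub>0\<^sub>b y\<^sub>a\<^sub>b by simp
    ultimately have "\<alpha> (pos ?a\<^sub>2) \<eta> = x (?a\<^sub>1, ?b\<^sub>1)"
      using kgraph_factorisation_unique[OF kg path_Mor[OF x zero_a\<^sub>1] action_Mor[OF act pos_ZZ[OF a\<^sub>2] \<eta>]
          path_Mor[OF x zero_a\<^sub>1] path_Mor[OF x ab\<^sub>1]]
        path_src[OF x zero_a\<^sub>1] path_rng[OF x ab\<^sub>1] path_deg[OF x ab\<^sub>1] path_cmp[OF x zero_a\<^sub>1 ab\<^sub>1]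
        action_deg[OF act pos_ZZ[OF a\<^sub>2] \<eta>] deg
      by simp
    then have "\<eta> = \<alpha> (neg ?a\<^sub>2) (x (?a\<^sub>1, ?b\<^sub>1))"
      using action_neg_pos(1)[OF act a\<^sub>2 \<eta>] by simp
    then show ?thesis
      using y\<^sub>a\<^sub>b by (simp add: ab_def skew_path_apply ab)
  qed
qed

lemma xinf_eq_skew_path:
  assumes "is_kgraph k G" and "is_action l G \<alpha>" and "x \<in> paths k G"
  shows "xinf k l G \<alpha> x = skew_path k l \<alpha> x"
  unfolding xinf_def
  using assms skew_path_in_paths skew_path_initial skew_paths_unique
  by (intro the_equality) blast+

lemma shift_skew_path:
  assumes act: "is_action l G \<alpha>" and x: "x \<in> paths k G" and p: "p \<in> NN k" and m: "m \<in> NN l"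
  shows "shift (k + l) (join k p m) (skew_path k l \<alpha> x)
    = skew_path k l \<alpha> (path_map k (\<alpha> (neg m)) (shift k p x))"
proof
  fix ab :: "(nat \<Rightarrow> nat) \<times> (nat \<Rightarrow> nat)"
  obtain a b where ab_def: "ab = (a, b)"
    by fastforce
  show "shift (k + l) (join k p m) (skew_path k l \<alpha> x) ab
      = skew_path k l \<alpha> (path_map k (\<alpha> (neg m)) (shift k p x)) ab"
  proof (cases "(a, b) \<in> Omega (k + l)")
    case False
    then show ?thesis
      by (simp add: ab_def shift_def skew_path_def)
  next
    case ab: True
    let ?q = "join k p m"
    have ab\<^sub>1: "(proj_fst k a, proj_fst k b) \<in> Omega k"
      using ab by (rule Omega_proj_fst)
    have a\<^sub>2: "proj_snd k a \<in> NN l"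
      using ab by (simp add: Omega_iff proj_snd_NN)
    have "proj_fst k (vadd ?q a) = vadd p (proj_fst k a)" "proj_fst k (vadd ?q b) = vadd p (proj_fst k b)"
      using p by (auto simp: proj_fst_def vadd_def join_def NN_def)
    moreover have "proj_snd k (vadd ?q a) = vadd m (proj_snd k a)"
      "proj_snd k (vadd ?q b) = vadd m (proj_snd k b)"
      by (simp_all add: proj_snd_def vadd_def join_def)
    moreover have "(\<lambda>i. neg (proj_snd k a) i + neg m i) = neg (vadd m (proj_snd k a))"
      by (simp add: neg_def vadd_def fun_eq_iff)
    moreover have "vsub (vadd m (proj_snd k b)) (vadd m (proj_snd k a)) = vsub (proj_snd k b) (proj_snd k a)"
      by (simp add: vsub_def vadd_def)
    ultimately show ?thesis
      using action_add[OF act neg_ZZ[OF a\<^sub>2] neg_ZZ[OF m] path_Mor[OF x Omega_vadd[OF ab\<^sub>1 p]]]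
        Omega_vadd[OF ab join_NN[OF p m]]
      by (simp add: ab_def shift_apply ab skew_path_apply path_map_apply ab\<^sub>1)
  qed
qed

theorem lemma4p5:
  fixes G :: "'m kgraph" and \<alpha> :: "(nat \<Rightarrow> int) \<Rightarrow> 'm \<Rightarrow> 'm"
    and k l :: nat and x :: "(nat \<Rightarrow> nat) \<times> (nat \<Rightarrow> nat) \<Rightarrow> 'm"
    and p m :: "nat \<Rightarrow> nat"
  assumes "is_kgraph k G" and "row_finite k G" and "no_sources k G"
    and "is_action l G \<alpha>"
    and "x \<in> paths k G" and "p \<in> NN k" and "m \<in> NN l"
  shows "shift (k + l) (join k p m) (xinf k l G \<alpha> x)
           = xinf k l G \<alpha> (path_map k (\<alpha> (neg m)) (shift k p x)) \<and>
         shift k p (path_map k (\<alpha> (neg m)) x) = path_map k (\<alpha> (neg m)) (shift k p x) \<and>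
         shift (k + l) (join k p m) (xinf k l G \<alpha> x)
           = xinf k l G \<alpha> (shift k p (path_map k (\<alpha> (neg m)) x))"
proof -
  note kg = assms(1) and act = assms(4) and x = assms(5) and p = assms(6) and m = assms(7)
  have commute: "shift k p (path_map k (\<alpha> (neg m)) x) = path_map k (\<alpha> (neg m)) (shift k p x)"
    using shift_path_map_commute[OF p] .
  have "path_map k (\<alpha> (neg m)) (shift k p x) \<in> paths k G"
    using path_map_in_paths[OF shift_in_paths[OF x p] action_automorphism[OF act neg_ZZ[OF m]]] .
  then have "shift (k + l) (join k p m) (xinf k l G \<alpha> x)
      = xinf k l G \<alpha> (path_map k (\<alpha> (neg m)) (shift k p x))"
    using shift_skew_path[OF act x p m] by (simp add: xinf_eq_skew_path[OF kg act] x)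
  with commute show ?thesis
    by simp
qed

end
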